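(* Let $(E,\delta)$ be a non-empty separable metric space, let $M\in\mathbb N$, $\varepsilon,L,D\in(0,\infty)$, let $(\Omega,\mathcal F,\mathbb P)$ be a probability space, let $X_{x,m}\colon\Omega\to\mathbb R$, $x\in E$, $m\in\{1,\dots,M\}$, and $Y_m\colon\Omega\to\mathbb R$, $m\in\{1,\dots,M\}$, be functions, assume for every $x\in E$ that $(X_{x,m},Y_m)$, $m\in\{1,\dots,M\}$, are i.i.d. random variables, assume $|X_{x,m}-X_{y,m}|\le L\delta(x,y)$ and $|X_{x,m}-Y_m|\le D$ for all $x,y\in E$, $m\in\{1,\dots,M\}$, let $\mathfrak E_x=\frac1M\sum_{m=1}^M|X_{x,m}-Y_m|^2$ and $\mathcal E_x=\mathbb E[|X_{x,1}-Y_1|^2]$ for $x\in E$. Then $\Omega\ni\omega\mapsto\sup_{x\in E}|\mathfrak E_x(\omega)-\mathcal E_x|\in[0,\infty]$ is $\mathcal F/\mathcal B([0,\infty])$-measurable and $$\mathbb P\bigl(\sup_{x\in E}|\mathfrak E_x-\mathcal E_x|\ge\varepsilon\bigr)\le 2\,\mathcal C_{(E,\delta),\frac{\varepsilon}{8LD}}\exp\Bigl(\frac{-\varepsilon^2M}{2D^4}\Bigr).$$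
   Context: Covering number: for a metric space $(E,\delta)$ and $r\in[0,\infty]$, $\mathcal C_{(E,\delta),r}=\inf(\{n\in\mathbb N_0\colon\exists A\subseteq E \text{ with } |A|\le n \text{ and } \forall x\in E\ \exists a\in A\colon\delta(a,x)\le r\}\cup\{\infty\})$. *)

theory Defs
  imports "HOL-Probability.Probability"
begin

definition covering_number :: "'a set \<Rightarrow> ('a \<Rightarrow> 'a \<Rightarrow> real) \<Rightarrow> real \<Rightarrow> enat" where
  "covering_number E \<delta> r =
     (INF n \<in> {n::nat. \<exists>A. A \<subseteq> E \<and> finite A \<and> card A \<le> n \<and> (\<forall>x\<in>E. \<exists>a\<in>A. \<delta> a x \<le> r)}. enat n)"

end

(*
  For fixed x, the empirical risk is a mean of M i.i.d. variables with values in [0, D^2], so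
  Hoeffding's inequality bounds the probability of a deviation of at least eps/2 from the
  expected risk by 2 exp (-eps^2 M / (2 D^4)).  Since t -> t^2 is 2D-Lipschitz on [-D, D], the
  empirical and the expected risk are both 2LD-Lipschitz in x, so their distance is
  4LD-Lipschitz.  Given a cover of E by balls of radius eps/(8LD), a deviation of at least eps
  somewhere forces a deviation of at least eps/2 at some centre, and the union bound over the
  centres gives the estimate.  The supremum is measurable because, by continuity, it equals the
  supremum over a countable dense subset of E.
*)
theory Submission
  imports Defs "HOL-Probability.Hoeffding"
begin

lemma SUP_eq_SUP_dense:
  fixes g :: "'a \<Rightarrow> 'b::{complete_linorder, linorder_topology}"
  assumes g: "continuous_map X euclidean g"
    and C: "C \<subseteq> topspace X" "X closure_of C = topspace X"
  shows "(SUP x\<in>topspace X. g x) = (SUP x\<in>C. g x)"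
proof (rule antisym)
  have "g ` topspace X \<subseteq> closure (g ` C)"
    using continuous_map_image_closure_subset[OF g, of C] C by simp
  also have "\<dots> \<subseteq> {..(SUP x\<in>C. g x)}"
    by (rule closure_minimal) (auto intro: SUP_upper)
  finally show "(SUP x\<in>topspace X. g x) \<le> (SUP x\<in>C. g x)"
    by (auto intro: SUP_least)
qed (rule SUP_subset_mono[OF C(1) order_refl])

lemma borel_measurable_SUP_separable:
  fixes g :: "'a \<Rightarrow> 'w \<Rightarrow> 'b::{complete_linorder, linorder_topology, second_countable_topology}"
  assumes "separable_space X"
    and meas: "\<And>x. x \<in> topspace X \<Longrightarrow> g x \<in> borel_measurable N"
    and cont: "\<And>\<omega>. \<omega> \<in> space N \<Longrightarrow> continuous_map X euclidean (\<lambda>x. g x \<omega>)"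
  shows "(\<lambda>\<omega>. SUP x\<in>topspace X. g x \<omega>) \<in> borel_measurable N"
proof -
  obtain C where C: "countable C" "C \<subseteq> topspace X" "X closure_of C = topspace X"
    using assms(1) unfolding separable_space_def by blast
  have "(\<lambda>\<omega>. SUP x\<in>C. g x \<omega>) \<in> borel_measurable N"
    using C by (intro borel_measurable_SUP meas) auto
  then show ?thesis
    by (rule measurable_cong[THEN iffD1, rotated]) (simp add: SUP_eq_SUP_dense[OF cont C(2,3)])
qed

lemma (in Metric_space) Lipschitz_imp_continuous_map_real:
  fixes f :: "'a \<Rightarrow> real"
  assumes "\<And>x y. x \<in> M \<Longrightarrow> y \<in> M \<Longrightarrow> \<bar>f x - f y\<bar> \<le> K * d x y"
  shows "continuous_map mtopology euclidean f"
proof -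
  have "\<exists>r>0. \<forall>y. y \<in> M \<and> d x y < r \<longrightarrow> dist (f x) (f y) < \<epsilon>"
    if "x \<in> M" "\<epsilon> > 0" for x \<epsilon>
  proof (intro exI conjI allI impI)
    show "\<epsilon> / (\<bar>K\<bar> + 1) > 0" using that by simp
    fix y assume y: "y \<in> M \<and> d x y < \<epsilon> / (\<bar>K\<bar> + 1)"
    have "dist (f x) (f y) \<le> \<bar>K\<bar> * d x y"
      using assms[of x y] that y by (simp add: dist_real_def abs_mult_pos mult_right_mono)
    also have "\<dots> < \<epsilon>"
    proof -
      have "(\<bar>K\<bar> + 1) * d x y < \<epsilon>"
        using y by (simp add: less_divide_eq mult.commute)
      then show ?thesis
        using nonneg[of x y] unfolding distrib_right by linarith
    qed
    finally show "dist (f x) (f y) < \<epsilon>" .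
  qed
  then show ?thesis
    using metric_continuous_map[OF Met_TC.Metric_space_axioms, of f] by simp
qed

lemma SUP_ennreal_le_Max_net:
  fixes f :: "'a \<Rightarrow> real"
  assumes "finite A" "A \<noteq> {}"
    and net: "\<And>x. x \<in> E \<Longrightarrow> \<exists>a\<in>A. f x \<le> f a + \<eta>"
  shows "(SUP x\<in>E. ennreal (f x)) \<le> ennreal (Max (f ` A) + \<eta>)"
proof (rule SUP_least)
  fix x assume "x \<in> E"
  then obtain a where "a \<in> A" "f x \<le> f a + \<eta>"
    using net by blast
  moreover have "f a \<le> Max (f ` A)"
    using \<open>a \<in> A\<close> \<open>finite A\<close> by simp
  ultimately show "ennreal (f x) \<le> ennreal (Max (f ` A) + \<eta>)"
    by (intro ennreal_leI) linarith
qed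

lemma emeasure_SUP_ge_le_sum_net:
  fixes g :: "'a \<Rightarrow> 'w \<Rightarrow> real"
  assumes A: "finite A" "A \<noteq> {}" and "\<epsilon> > 0"
    and sets: "\<And>a. a \<in> A \<Longrightarrow> {\<omega> \<in> space N. \<epsilon> - \<eta> \<le> g a \<omega>} \<in> sets N"
    and net: "\<And>x \<omega>. x \<in> E \<Longrightarrow> \<omega> \<in> space N \<Longrightarrow> \<exists>a\<in>A. g x \<omega> \<le> g a \<omega> + \<eta>"
  shows "emeasure N {\<omega> \<in> space N. ennreal \<epsilon> \<le> (SUP x\<in>E. ennreal (g x \<omega>))}
           \<le> (\<Sum>a\<in>A. emeasure N {\<omega> \<in> space N. \<epsilon> - \<eta> \<le> g a \<omega>})"
proof -
  have "{\<omega> \<in> space N. ennreal \<epsilon> \<le> (SUP x\<in>E. ennreal (g x \<omega>))}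
          \<subseteq> (\<Union>a\<in>A. {\<omega> \<in> space N. \<epsilon> - \<eta> \<le> g a \<omega>})"
  proof safe
    fix \<omega> assume \<omega>: "\<omega> \<in> space N" and ge: "ennreal \<epsilon> \<le> (SUP x\<in>E. ennreal (g x \<omega>))"
    have "(SUP x\<in>E. ennreal (g x \<omega>)) \<le> ennreal (Max ((\<lambda>a. g a \<omega>) ` A) + \<eta>)"
      using net \<omega> by (intro SUP_ennreal_le_Max_net A) auto
    with ge have "ennreal \<epsilon> \<le> ennreal (Max ((\<lambda>a. g a \<omega>) ` A) + \<eta>)"
      by (rule order_trans)
    with \<open>\<epsilon> > 0\<close> have "\<epsilon> - \<eta> \<le> Max ((\<lambda>a. g a \<omega>) ` A)"
      by (auto simp: ennreal_le_iff2)
    then show "\<omega> \<in> (\<Union>a\<in>A. {\<omega> \<in> space N. \<epsilon> - \<eta> \<le> g a \<omega>})"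
      using A \<omega> by (auto simp: Max_ge_iff)
  qed
  then have "emeasure N {\<omega> \<in> space N. ennreal \<epsilon> \<le> (SUP x\<in>E. ennreal (g x \<omega>))}
               \<le> emeasure N (\<Union>a\<in>A. {\<omega> \<in> space N. \<epsilon> - \<eta> \<le> g a \<omega>})"
    using sets A by (intro emeasure_mono sets.finite_UN) auto
  also have "\<dots> \<le> (\<Sum>a\<in>A. emeasure N {\<omega> \<in> space N. \<epsilon> - \<eta> \<le> g a \<omega>})"
    using sets A by (intro emeasure_subadditive_finite) auto
  finally show ?thesis .
qed

lemma le_covering_number_mult:
  fixes c b :: ennreal
  assumes "b \<noteq> 0"
    and cover: "\<And>A. A \<subseteq> E \<Longrightarrow> finite A \<Longrightarrow> \<forall>x\<in>E. \<exists>a\<in>A. \<delta> a x \<le> r \<Longrightarrow>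
                  c \<le> of_nat (card A) * b"
  shows "c \<le> ennreal_of_enat (covering_number E \<delta> r) * b"
proof -
  define S where
    "S = {n::nat. \<exists>A. A \<subseteq> E \<and> finite A \<and> card A \<le> n \<and> (\<forall>x\<in>E. \<exists>a\<in>A. \<delta> a x \<le> r)}"
  have cn: "covering_number E \<delta> r = (INF n\<in>S. enat n)"
    by (simp add: covering_number_def S_def)
  show ?thesis
  proof (cases "S = {}")
    case True
    \<comment> \<open>the covering number is \<open>\<infinity>\<close>, and \<open>\<infinity> * b = \<infinity>\<close> only because \<open>b \<noteq> 0\<close>\<close>
    then show ?thesis
      using \<open>b \<noteq> 0\<close> by (simp add: cn top_enat_def ennreal_top_mult)
  next
    case False
    then have "Inf S \<in> S"
      by (rule Inf_nat_def1)
    then obtain A where A: "A \<subseteq> E" "finite A" "card A \<le> Inf S" "\<forall>x\<in>E. \<exists>a\<in>A. \<delta> a x \<le> r"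
      unfolding S_def by blast
    have "covering_number E \<delta> r = enat (Inf S)"
      unfolding cn
      by (rule antisym[OF INF_lower[OF \<open>Inf S \<in> S\<close>] INF_greatest]) (simp add: cInf_lower)
    have "c \<le> of_nat (card A) * b"
      using cover A by blast
    also have "\<dots> \<le> of_nat (Inf S) * b"
      using A(3) by (intro mult_right_mono) auto
    finally show ?thesis
      using \<open>covering_number E \<delta> r = enat (Inf S)\<close> by simp
  qed
qed

lemma (in Metric_space) SUP_Lipschitz_tail_le_covering_number:
  fixes g :: "'a \<Rightarrow> 'w \<Rightarrow> real" and N :: "'w measure" and b :: ennreal
  assumes "separable_space mtopology" "M \<noteq> {}" "\<epsilon> > 0" "K > 0" "b \<noteq> 0"
    and meas: "\<And>x. x \<in> M \<Longrightarrow> g x \<in> borel_measurable N"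
    and lip: "\<And>x y \<omega>. x \<in> M \<Longrightarrow> y \<in> M \<Longrightarrow> \<omega> \<in> space N \<Longrightarrow> \<bar>g x \<omega> - g y \<omega>\<bar> \<le> K * d x y"
    and tail: "\<And>x. x \<in> M \<Longrightarrow> emeasure N {\<omega> \<in> space N. \<epsilon> / 2 \<le> g x \<omega>} \<le> b"
  shows "(\<lambda>\<omega>. SUP x\<in>M. ennreal (g x \<omega>)) \<in> borel_measurable N \<and>
         emeasure N {\<omega> \<in> space N. ennreal \<epsilon> \<le> (SUP x\<in>M. ennreal (g x \<omega>))}
           \<le> ennreal_of_enat (covering_number M d (\<epsilon> / (2 * K))) * b"
proof
  have "continuous_map mtopology euclidean (\<lambda>x. ennreal (g x \<omega>))" if "\<omega> \<in> space N" for \<omega>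
  proof -
    have "continuous_map mtopology euclidean (\<lambda>x. g x \<omega>)"
      using lip that by (intro Lipschitz_imp_continuous_map_real)
    moreover have "continuous_map euclidean euclidean ennreal"
      using continuous_on_ennreal[OF continuous_on_id] by simp
    ultimately show ?thesis
      by (rule continuous_map_compose[unfolded o_def])
  qed
  then show "(\<lambda>\<omega>. SUP x\<in>M. ennreal (g x \<omega>)) \<in> borel_measurable N"
    using borel_measurable_SUP_separable[OF \<open>separable_space mtopology\<close>, of "\<lambda>x \<omega>. ennreal (g x \<omega>)"] meas
    by simp
next
  show "emeasure N {\<omega> \<in> space N. ennreal \<epsilon> \<le> (SUP x\<in>M. ennreal (g x \<omega>))}
          \<le> ennreal_of_enat (covering_number M d (\<epsilon> / (2 * K))) * b"
  proof (rule le_covering_number_mult[OF \<open>b \<noteq> 0\<close>])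
    fix A assume A: "A \<subseteq> M" "finite A" "\<forall>x\<in>M. \<exists>a\<in>A. d a x \<le> \<epsilon> / (2 * K)"
    have net: "\<exists>a\<in>A. g x \<omega> \<le> g a \<omega> + \<epsilon> / 2" if "x \<in> M" "\<omega> \<in> space N" for x \<omega>
    proof -
      obtain a where a: "a \<in> A" "d a x \<le> \<epsilon> / (2 * K)"
        using A(3) \<open>x \<in> M\<close> by blast
      have "g x \<omega> \<le> g a \<omega> + K * d a x"
        using lip[of a x \<omega>] a A(1) that by auto
      also have "K * d a x \<le> \<epsilon> / 2"
        using a(2) \<open>K > 0\<close> by (simp add: field_simps)
      finally show ?thesis
        using a(1) by auto
    qed
    have "emeasure N {\<omega> \<in> space N. ennreal \<epsilon> \<le> (SUP x\<in>M. ennreal (g x \<omega>))}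
            \<le> (\<Sum>a\<in>A. emeasure N {\<omega> \<in> space N. \<epsilon> - \<epsilon> / 2 \<le> g a \<omega>})"
    proof (rule emeasure_SUP_ge_le_sum_net[OF \<open>finite A\<close> _ \<open>\<epsilon> > 0\<close> _ net])
      show "A \<noteq> {}"
        using A(3) \<open>M \<noteq> {}\<close> by blast
      show "{\<omega> \<in> space N. \<epsilon> - \<epsilon> / 2 \<le> g a \<omega>} \<in> sets N" if "a \<in> A" for a
      proof -
        have [measurable]: "g a \<in> borel_measurable N"
          using meas that A(1) by blast
        show ?thesis
          by measurable
      qed
    qed
    also have "\<dots> \<le> (\<Sum>a\<in>A. b)"
      using tail A(1) by (intro sum_mono) auto
    finally show "emeasure N {\<omega> \<in> space N. ennreal \<epsilon> \<le> (SUP x\<in>M. ennreal (g x \<omega>))}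
                    \<le> of_nat (card A) * b"
      by simp
  qed
qed

lemma square_loss_diff_le:
  fixes u v w D c :: real
  assumes "\<bar>u - w\<bar> \<le> D" "\<bar>v - w\<bar> \<le> D" "\<bar>u - v\<bar> \<le> c"
  shows "\<bar>(u - w)\<^sup>2 - (v - w)\<^sup>2\<bar> \<le> 2 * D * c"
proof -
  have "\<bar>(u - w)\<^sup>2 - (v - w)\<^sup>2\<bar> = \<bar>u - v\<bar> * \<bar>(u - w) + (v - w)\<bar>"
    by (simp add: power2_eq_square abs_mult[symmetric] algebra_simps)
  also have "\<dots> \<le> c * (2 * D)"
    using assms by (intro mult_mono) auto
  finally show ?thesis
    by (simp add: mult_ac)
qed

lemma abs_mean_diff_le:
  fixes u v :: "'i \<Rightarrow> real"
  assumes "finite I" "I \<noteq> {}" "\<And>i. i \<in> I \<Longrightarrow> \<bar>u i - v i\<bar> \<le> c"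
  shows "\<bar>(\<Sum>i\<in>I. u i) / card I - (\<Sum>i\<in>I. v i) / card I\<bar> \<le> c"
proof -
  have "\<bar>\<Sum>i\<in>I. u i - v i\<bar> \<le> (\<Sum>i\<in>I. c)"
    using assms(3) by (intro order_trans[OF sum_abs] sum_mono)
  then show ?thesis
    using assms(1,2) by (simp add: sum_subtractf diff_divide_distrib[symmetric] divide_le_eq mult.commute)
qed

lemma (in prob_space) abs_expectation_diff_le:
  fixes f g :: "'a \<Rightarrow> real"
  assumes "integrable M f" "integrable M g" "\<And>\<omega>. \<omega> \<in> space M \<Longrightarrow> \<bar>f \<omega> - g \<omega>\<bar> \<le> c"
  shows "\<bar>expectation f - expectation g\<bar> \<le> c"
proof -
  have "\<bar>expectation f - expectation g\<bar> = \<bar>expectation (\<lambda>\<omega>. f \<omega> - g \<omega>)\<bar>"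
    using assms by simp
  also have "\<dots> \<le> expectation (\<lambda>\<omega>. \<bar>f \<omega> - g \<omega>\<bar>)"
    by (rule integral_abs_bound)
  also have "\<dots> \<le> expectation (\<lambda>_. c)"
    using assms by (intro integral_mono) auto
  finally show ?thesis
    by (simp add: prob_space)
qed

definition empirical_risk :: "'i set \<Rightarrow> ('i \<Rightarrow> 'w \<Rightarrow> real) \<Rightarrow> ('i \<Rightarrow> 'w \<Rightarrow> real) \<Rightarrow> 'w \<Rightarrow> real" where
  "empirical_risk I U V \<omega> = (\<Sum>i\<in>I. (U i \<omega> - V i \<omega>)\<^sup>2) / card I"

definition expected_risk :: "'w measure \<Rightarrow> ('w \<Rightarrow> real) \<Rightarrow> ('w \<Rightarrow> real) \<Rightarrow> real" where
  "expected_risk P u v = (\<integral>\<omega>. (u \<omega> - v \<omega>)\<^sup>2 \<partial>P)"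

lemma empirical_risk_diff_le:
  assumes "finite I" "I \<noteq> {}"
    and "\<And>i. i \<in> I \<Longrightarrow> \<bar>U i \<omega> - W i \<omega>\<bar> \<le> D" "\<And>i. i \<in> I \<Longrightarrow> \<bar>V i \<omega> - W i \<omega>\<bar> \<le> D"
    and "\<And>i. i \<in> I \<Longrightarrow> \<bar>U i \<omega> - V i \<omega>\<bar> \<le> c"
  shows "\<bar>empirical_risk I U W \<omega> - empirical_risk I V W \<omega>\<bar> \<le> 2 * D * c"
  unfolding empirical_risk_def using assms by (intro abs_mean_diff_le square_loss_diff_le)

lemma (in prob_space) expected_risk_diff_le:
  assumes [measurable]: "u \<in> borel_measurable M" "v \<in> borel_measurable M" "w \<in> borel_measurable M"
    and "\<And>\<omega>. \<omega> \<in> space M \<Longrightarrow> \<bar>u \<omega> - w \<omega>\<bar> \<le> D" "\<And>\<omega>. \<omega> \<in> space M \<Longrightarrow> \<bar>v \<omega> - w \<omega>\<bar> \<le> D"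
    and "\<And>\<omega>. \<omega> \<in> space M \<Longrightarrow> \<bar>u \<omega> - v \<omega>\<bar> \<le> c"
  shows "\<bar>expected_risk M u w - expected_risk M v w\<bar> \<le> 2 * D * c"
proof -
  have "integrable M (\<lambda>\<omega>. (f \<omega> - w \<omega>)\<^sup>2)"
    if [measurable]: "f \<in> borel_measurable M" and bound: "\<And>\<omega>. \<omega> \<in> space M \<Longrightarrow> \<bar>f \<omega> - w \<omega>\<bar> \<le> D" for f
    using power_mono[OF bound abs_ge_zero, of _ 2]
    by (intro integrable_const_bound[where B = "D\<^sup>2"]) auto
  then show ?thesis
    unfolding expected_risk_def using assms
    by (intro abs_expectation_diff_le square_loss_diff_le) auto
qed

lemma (in prob_space) risk_deviation_diff_le:
  assumes "finite I" "j \<in> I" "\<omega> \<in> space M"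
    and [measurable]: "U j \<in> borel_measurable M" "V j \<in> borel_measurable M" "W j \<in> borel_measurable M"
    and "\<And>i \<omega>. i \<in> I \<Longrightarrow> \<omega> \<in> space M \<Longrightarrow> \<bar>U i \<omega> - W i \<omega>\<bar> \<le> D"
      "\<And>i \<omega>. i \<in> I \<Longrightarrow> \<omega> \<in> space M \<Longrightarrow> \<bar>V i \<omega> - W i \<omega>\<bar> \<le> D"
      "\<And>i \<omega>. i \<in> I \<Longrightarrow> \<omega> \<in> space M \<Longrightarrow> \<bar>U i \<omega> - V i \<omega>\<bar> \<le> c"
  shows "\<bar>\<bar>empirical_risk I U W \<omega> - expected_risk M (U j) (W j)\<bar>
           - \<bar>empirical_risk I V W \<omega> - expected_risk M (V j) (W j)\<bar>\<bar> \<le> 4 * D * c"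
proof -
  have "\<bar>empirical_risk I U W \<omega> - empirical_risk I V W \<omega>\<bar> \<le> 2 * D * c"
    using assms by (intro empirical_risk_diff_le) auto
  moreover have "\<bar>expected_risk M (U j) (W j) - expected_risk M (V j) (W j)\<bar> \<le> 2 * D * c"
    using assms by (intro expected_risk_diff_le) auto
  ultimately show ?thesis
    by arith
qed

lemma (in prob_space) Hoeffding_mean_abs_ge_iid_compose:
  fixes W :: "'i \<Rightarrow> 'a \<Rightarrow> 'b" and h :: "'b \<Rightarrow> real" and a b t :: real
  assumes I: "finite I" "j \<in> I"
    and indep: "indep_vars (\<lambda>_. N) W I"
    and ident: "\<And>i. i \<in> I \<Longrightarrow> distr M N (W i) = distr M N (W j)"
    and h: "h \<in> borel_measurable N"
    and bounded: "\<And>i \<omega>. i \<in> I \<Longrightarrow> \<omega> \<in> space M \<Longrightarrow> h (W i \<omega>) \<in> {a..b}"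
    and "a < b" "t \<ge> 0"
  shows "prob {\<omega> \<in> space M. t \<le> \<bar>(\<Sum>i\<in>I. h (W i \<omega>)) / card I - expectation (\<lambda>\<omega>. h (W j \<omega>))\<bar>}
           \<le> 2 * exp (- 2 * real (card I) * t\<^sup>2 / (b - a)\<^sup>2)"
proof -
  have W_meas: "W i \<in> measurable M N" if "i \<in> I" for i
    using indep that unfolding indep_vars_def by blast
  interpret Hoeffding_ineq_iid M I "\<lambda>i \<omega>. h (W i \<omega>)" "\<lambda>\<omega>. h (W j \<omega>)" a b
      "expectation (\<lambda>\<omega>. h (W j \<omega>))"
  proof unfold_locales
    show "indep_vars (\<lambda>_. borel) (\<lambda>i \<omega>. h (W i \<omega>)) I"
      using indep h by (rule indep_vars_compose2)
    show "distr M borel (\<lambda>\<omega>. h (W i \<omega>)) = distr M borel (\<lambda>\<omega>. h (W j \<omega>))" if "i \<in> I" for i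
      using distr_distr[OF h W_meas[OF that]] distr_distr[OF h W_meas[OF I(2)]] ident[OF that]
      by (simp add: o_def)
    show "random_variable borel (\<lambda>\<omega>. h (W j \<omega>))"
      using h W_meas[OF I(2)] by measurable
    show "AE \<omega> in M. h (W j \<omega>) \<in> {a..b}"
      using bounded I(2) by (intro AE_I2) auto
  qed (use I in auto)
  show ?thesis
    by (rule Hoeffding_ineq_abs_ge') (use assms in auto)
qed

lemma (in prob_space) Hoeffding_empirical_risk:
  fixes U V :: "'i \<Rightarrow> 'a \<Rightarrow> real" and D t :: real
  assumes "finite I" "j \<in> I"
    and indep: "indep_vars (\<lambda>_. borel) (\<lambda>i \<omega>. (U i \<omega>, V i \<omega>)) I"
    and ident: "\<And>i. i \<in> I \<Longrightarrow> distr M borel (\<lambda>\<omega>. (U i \<omega>, V i \<omega>)) = distr M borel (\<lambda>\<omega>. (U j \<omega>, V j \<omega>))"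
    and bounded: "\<And>i \<omega>. i \<in> I \<Longrightarrow> \<omega> \<in> space M \<Longrightarrow> \<bar>U i \<omega> - V i \<omega>\<bar> \<le> D"
    and "D > 0" "t \<ge> 0"
  shows "emeasure M {\<omega> \<in> space M. t \<le> \<bar>empirical_risk I U V \<omega> - expected_risk M (U j) (V j)\<bar>}
           \<le> ennreal (2 * exp (- 2 * real (card I) * t\<^sup>2 / D ^ 4))"
proof -
  define loss where "loss = (\<lambda>p::real \<times> real. (fst p - snd p)\<^sup>2)"
  have "prob {\<omega> \<in> space M. t \<le> \<bar>(\<Sum>i\<in>I. loss (U i \<omega>, V i \<omega>)) / card I
                                     - expectation (\<lambda>\<omega>. loss (U j \<omega>, V j \<omega>))\<bar>}
          \<le> 2 * exp (- 2 * real (card I) * t\<^sup>2 / (D\<^sup>2 - 0)\<^sup>2)"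
  proof (rule Hoeffding_mean_abs_ge_iid_compose[OF \<open>finite I\<close> \<open>j \<in> I\<close> indep ident])
    show "loss \<in> borel_measurable borel"
      unfolding loss_def by (intro borel_measurable_continuous_onI continuous_intros)
    show "loss (U i \<omega>, V i \<omega>) \<in> {0..D\<^sup>2}" if "i \<in> I" "\<omega> \<in> space M" for i \<omega>
      using power_mono[OF bounded[OF that] abs_ge_zero, of 2] by (simp add: loss_def)
  qed (use \<open>D > 0\<close> \<open>t \<ge> 0\<close> in auto)
  then show ?thesis
    by (simp add: empirical_risk_def expected_risk_def loss_def emeasure_eq_measure flip: power_mult)
qed

theorem lemma3p19:
  fixes E :: "'e set" and \<delta> :: "'e \<Rightarrow> 'e \<Rightarrow> real"
    and M :: nat and \<epsilon> L D :: real
    and P :: "'w measure"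
    and X :: "'e \<Rightarrow> nat \<Rightarrow> 'w \<Rightarrow> real" and Y :: "nat \<Rightarrow> 'w \<Rightarrow> real"
  assumes metric: "Metric_space E \<delta>"
    and separable: "separable_space (Metric_space.mtopology E \<delta>)"
    and nonempty: "E \<noteq> {}"
    and M_pos: "M \<ge> 1"
    and eps_pos: "\<epsilon> > 0" and L_pos: "L > 0" and D_pos: "D > 0"
    and prob: "prob_space P"
    and indep: "\<And>x. x \<in> E \<Longrightarrow>
        prob_space.indep_vars P (\<lambda>_. borel) (\<lambda>m \<omega>. (X x m \<omega>, Y m \<omega>)) {1..M}"
    and ident: "\<And>x m. x \<in> E \<Longrightarrow> m \<in> {1..M} \<Longrightarrow>
        distr P borel (\<lambda>\<omega>. (X x m \<omega>, Y m \<omega>)) = distr P borel (\<lambda>\<omega>. (X x 1 \<omega>, Y 1 \<omega>))"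
    and lip: "\<And>x y m \<omega>. x \<in> E \<Longrightarrow> y \<in> E \<Longrightarrow> m \<in> {1..M} \<Longrightarrow> \<omega> \<in> space P \<Longrightarrow>
        \<bar>X x m \<omega> - X y m \<omega>\<bar> \<le> L * \<delta> x y"
    and bdd: "\<And>x m \<omega>. x \<in> E \<Longrightarrow> m \<in> {1..M} \<Longrightarrow> \<omega> \<in> space P \<Longrightarrow>
        \<bar>X x m \<omega> - Y m \<omega>\<bar> \<le> D"
  defines "emp \<equiv> (\<lambda>x \<omega>. (1 / real M) * (\<Sum>m\<in>{1..M}. \<bar>X x m \<omega> - Y m \<omega>\<bar> ^ 2))"
    and "gen \<equiv> (\<lambda>x. prob_space.expectation P (\<lambda>\<omega>. \<bar>X x 1 \<omega> - Y 1 \<omega>\<bar> ^ 2))"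
  shows "(\<lambda>\<omega>. SUP x\<in>E. ennreal \<bar>emp x \<omega> - gen x\<bar>) \<in> borel_measurable P \<and>
         emeasure P {\<omega> \<in> space P. (SUP x\<in>E. ennreal \<bar>emp x \<omega> - gen x\<bar>) \<ge> ennreal \<epsilon>}
         \<le> 2 * ennreal_of_enat (covering_number E \<delta> (\<epsilon> / (8 * L * D)))
             * ennreal (exp (- (\<epsilon> ^ 2 * real M) / (2 * D ^ 4)))"
proof -
  interpret P: prob_space P by (rule prob)
  interpret E: Metric_space E \<delta> by (rule metric)
  define dev where "dev = (\<lambda>x \<omega>. \<bar>empirical_risk {1..M} (X x) Y \<omega> - expected_risk P (X x 1) (Y 1)\<bar>)"
  have one: "1 \<in> {1..M}"
    using M_pos by simp
  have [measurable]: "X x m \<in> borel_measurable P" "Y m \<in> borel_measurable P"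
    if "x \<in> E" "m \<in> {1..M}" for x m
    using indep[OF that(1)] that(2)
    by (auto simp: P.indep_vars_def borel_prod[symmetric] measurable_pair_iff o_def)
  have dev_meas: "dev x \<in> borel_measurable P" if "x \<in> E" for x
    unfolding dev_def empirical_risk_def using that by measurable
  have dev_Lipschitz: "\<bar>dev x \<omega> - dev y \<omega>\<bar> \<le> (4 * D * L) * \<delta> x y"
    if "x \<in> E" "y \<in> E" "\<omega> \<in> space P" for x y \<omega>
    unfolding dev_def mult.assoc[of _ L]
    by (rule P.risk_deviation_diff_le[OF _ one]) (use bdd lip that one in auto)
  have dev_tail: "emeasure P {\<omega> \<in> space P. \<epsilon> / 2 \<le> dev x \<omega>}
                    \<le> ennreal (2 * exp (- (\<epsilon> ^ 2 * real M) / (2 * D ^ 4)))" if "x \<in> E" for x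
  proof -
    have "emeasure P {\<omega> \<in> space P. \<epsilon> / 2 \<le> dev x \<omega>}
            \<le> ennreal (2 * exp (- 2 * real (card {1..M}) * (\<epsilon> / 2)\<^sup>2 / D ^ 4))"
      unfolding dev_def
      by (rule P.Hoeffding_empirical_risk[OF _ one indep[OF that] ident[OF that] bdd[OF that]])
         (use eps_pos D_pos in auto)
    also have "\<dots> = ennreal (2 * exp (- (\<epsilon> ^ 2 * real M) / (2 * D ^ 4)))"
      by (simp add: power2_eq_square)
    finally show ?thesis .
  qed
  have "\<bar>emp x \<omega> - gen x\<bar> = dev x \<omega>" for x \<omega>
    by (simp add: emp_def gen_def dev_def empirical_risk_def expected_risk_def)
  moreover have "\<epsilon> / (2 * (4 * D * L)) = \<epsilon> / (8 * L * D)"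
    by simp
  ultimately show ?thesis
    using E.SUP_Lipschitz_tail_le_covering_number[OF separable nonempty eps_pos _ _
        dev_meas dev_Lipschitz dev_tail] D_pos L_pos
    by (simp add: ennreal_mult mult_ac)
qed

end
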